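(* For every positive integer $n$, $\Delta\big(t_{1,1}(u-n+1)t_{1,1}(u-n+2)\cdots t_{1,1}(u)\big)= t_{1,1}(u-n+1)t_{1,1}(u-n+2)\cdots t_{1,1}(u)\otimes t_{1,1}(u)\cdots t_{1,1}(u-n+2)t_{1,1}(u-n+1) + n\, t_{1,2}(u-n+1)t_{1,1}(u-n+2)\cdots t_{1,1}(u)\otimes t_{1,1}(u)\cdots t_{1,1}(u-n+2)t_{2,1}(u-n+1)$.
   Context: Let $k$ be an algebraically closed field of characteristic $p>2$. Fix parities $|1|=0$, $|2|=1$. The super Yangian $Y=Y_{1|1}$ is the associative superalgebra over $k$ generated by $t_{i,j}^{(r)}$ ($1\le i,j\le2$, $r>0$) of parity $|i|+|j|\pmod2$, with relations $[t_{i,j}^{(r)},t_{k,l}^{(s)}]=(-1)^{|i||j|+|i||k|+|j||k|}\sum_{t=0}^{\min(r,s)-1}(t_{k,j}^{(t)}t_{i,l}^{(r+s-1-t)}-t_{k,j}^{(r+s-1-t)}t_{i,l}^{(t)})$ (supercommutator), $t_{i,j}^{(0)}=\delta_{ij}$. Put $t_{i,j}(u)=\sum_{r\ge0}t_{i,j}^{(r)}u^{-r}$. The comultiplication $\Delta:Y\to Y\otimes Y$ (a superalgebra homomorphism, with the sign rule $(a\otimes b)(c\otimes d)=(-1)^{|b||c|}ac\otimes bd$) is given by $\Delta(t_{i,j}(u))=\sum_{k=1}^2t_{i,k}(u)\otimes t_{k,j}(u)$, applied coefficientwise in $u^{-1}$. *)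

theory Defs
  imports "HOL-Computational_Algebra.Computational_Algebra"
begin

definition par :: "nat \<Rightarrow> nat" where
  "par i = (if i = 1 then 0 else 1)"

definition tt :: "(nat \<Rightarrow> nat \<Rightarrow> nat \<Rightarrow> 'b::ring_1) \<Rightarrow> nat \<Rightarrow> nat \<Rightarrow> nat \<Rightarrow> 'b" where
  "tt T i j r = (if r = 0 then (if i = j then 1 else 0) else T i j r)"

text \<open>The defining relations of the super Yangian Y(1|1), written with the
  supercommutator [x,y] = xy - (-1)^{|x||y|} yx, for the family T.\<close>
definition yangian_rels :: "(nat \<Rightarrow> nat \<Rightarrow> nat \<Rightarrow> 'b::ring_1) \<Rightarrow> bool" where
  "yangian_rels T \<longleftrightarrow>
     (\<forall>i\<in>{1,2}. \<forall>j\<in>{1,2}. \<forall>k\<in>{1,2}. \<forall>l\<in>{1,2}. \<forall>r>0. \<forall>s>0.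
        T i j r * T k l s
          - (- 1) ^ ((par i + par j) * (par k + par l)) * T k l s * T i j r
        = (- 1) ^ (par i * par j + par i * par k + par j * par k) *
          (\<Sum>t<min r s. tt T k j t * tt T i l (r + s - 1 - t)
                         - tt T k j (r + s - 1 - t) * tt T i l t))"

text \<open>Images of t_{ij}^{(r)} \<otimes> 1 (family A) and 1 \<otimes> t_{kl}^{(s)} (family B)
  super-commute in Y \<otimes> Y (sign rule of the super tensor product).\<close>
definition super_commute_families ::
  "(nat \<Rightarrow> nat \<Rightarrow> nat \<Rightarrow> 'b::ring_1) \<Rightarrow> (nat \<Rightarrow> nat \<Rightarrow> nat \<Rightarrow> 'b) \<Rightarrow> bool" where
  "super_commute_families A B \<longleftrightarrow>
     (\<forall>i\<in>{1,2}. \<forall>j\<in>{1,2}. \<forall>k\<in>{1,2}. \<forall>l\<in>{1,2}. \<forall>r>0. \<forall>s>0.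
        A i j r * B k l s = (- 1) ^ ((par i + par j) * (par k + par l)) * B k l s * A i j r)"

definition is_algebra_over :: "('k::field \<Rightarrow> 'b::ring_1) \<Rightarrow> bool" where
  "is_algebra_over emb \<longleftrightarrow>
     emb 1 = 1 \<and> (\<forall>x y. emb (x + y) = emb x + emb y) \<and> (\<forall>x y. emb (x * y) = emb x * emb y)
     \<and> (\<forall>c z. emb c * z = z * emb c)"

text \<open>Coefficient of u^{-m} in (u - c)^{-r}, expanded in u^{-1}.\<close>
definition shift_coeff :: "nat \<Rightarrow> nat \<Rightarrow> nat \<Rightarrow> nat" where
  "shift_coeff c r m =
     (if r = 0 then (if m = 0 then 1 else 0)
      else if r \<le> m then ((m - 1) choose (r - 1)) * c ^ (m - r) else 0)"

text \<open>The series t_{ij}(u - c) = sum_r t_{ij}^{(r)} (u-c)^{-r}, as a formal power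
  series in X = u^{-1}.\<close>
definition tser :: "(nat \<Rightarrow> nat \<Rightarrow> nat \<Rightarrow> 'b::ring_1) \<Rightarrow> nat \<Rightarrow> nat \<Rightarrow> nat \<Rightarrow> 'b fps" where
  "tser T i j c = Abs_fps (\<lambda>m. \<Sum>r\<le>m. tt T i j r * of_nat (shift_coeff c r m))"

text \<open>Image of Delta(t_{ij}^{(r)}) = sum_k sum_{a+b=r} t_{ik}^{(a)} \<otimes> t_{kj}^{(b)},
  where x \<otimes> y is represented by (x \<otimes> 1)(1 \<otimes> y).\<close>
definition Delta_gen ::
  "(nat \<Rightarrow> nat \<Rightarrow> nat \<Rightarrow> 'b::ring_1) \<Rightarrow> (nat \<Rightarrow> nat \<Rightarrow> nat \<Rightarrow> 'b) \<Rightarrow> nat \<Rightarrow> nat \<Rightarrow> nat \<Rightarrow> 'b" where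
  "Delta_gen A B i j r = (\<Sum>k\<in>{1,2}. \<Sum>a\<le>r. tt A i k a * tt B k j (r - a))"

end

theory Submission
  imports Defs
begin

text \<open>
  Put \<open>X = u\<^sup>-\<^sup>1\<close> and \<open>x\<^sub>c = (u - c)\<^sup>-\<^sup>1 = X / (1 - c X)\<close>, so that
  \<open>t\<^sub>i\<^sub>j(u - c) = \<Sum>\<^sub>r t\<^sub>i\<^sub>j\<^sup>(\<^sup>r\<^sup>) x\<^sub>c\<^sup>r\<close>. The partial fraction identity
  \<open>(b - a) x\<^sub>a x\<^sub>b = x\<^sub>b - x\<^sub>a\<close> turns the defining relations into the series relations
  \<open>(b - a) [t\<^sub>i\<^sub>j(u - a), t\<^sub>k\<^sub>l(u - b)] = \<plusminus>(t\<^sub>k\<^sub>j(u - a) t\<^sub>i\<^sub>l(u - b) - t\<^sub>k\<^sub>j(u - b) t\<^sub>i\<^sub>l(u - a))\<close>.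
  Since \<open>\<Delta>(t\<^sub>1\<^sub>1(u)) = t\<^sub>1\<^sub>1(u) \<otimes> t\<^sub>1\<^sub>1(u) + t\<^sub>1\<^sub>2(u) \<otimes> t\<^sub>2\<^sub>1(u)\<close>, the product is expanded by
  induction on \<open>n\<close>, splitting off its rightmost factor \<open>\<Delta>(t\<^sub>1\<^sub>1(u))\<close>. In the first tensor
  factor, \<open>t\<^sub>1\<^sub>1(u - d - 1) t\<^sub>1\<^sub>2(u - d) = t\<^sub>1\<^sub>2(u - d - 1) t\<^sub>1\<^sub>1(u - d)\<close> moves \<open>t\<^sub>1\<^sub>2\<close> to
  the front and \<open>t\<^sub>1\<^sub>2(u - d - 1) t\<^sub>1\<^sub>2(u - d) = 0\<close> (which needs \<open>2 \<noteq> 0\<close>) kills every term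
  with two factors \<open>t\<^sub>1\<^sub>2\<close>; in the second factor the relation between \<open>t\<^sub>1\<^sub>1\<close> and \<open>t\<^sub>2\<^sub>1\<close>
  moves \<open>t\<^sub>2\<^sub>1\<close> to the end, producing the coefficient \<open>n\<close>.
\<close>

text \<open>\<open>shift_series c\<close> is \<open>x\<^sub>c\<close>, with integer coefficients.\<close>

definition shift_series :: "nat \<Rightarrow> int fps" where
  "shift_series c = Abs_fps (\<lambda>m. if m = 0 then 0 else int c ^ (m - 1))"

lemma shift_series_denominator:
  "(1 - fps_const (int c) * fps_X) * shift_series c = fps_X"
proof (rule fps_ext)
  fix m
  have "((1 - fps_const (int c) * fps_X) * shift_series c) $ m
      = shift_series c $ m - int c * (fps_X * shift_series c) $ m"
    by (simp add: algebra_simps)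
  also have "\<dots> = fps_X $ m"
    by (cases m) (auto simp: shift_series_def power_Suc[symmetric] simp del: power_Suc)
  finally show "((1 - fps_const (int c) * fps_X) * shift_series c) $ m = fps_X $ m" .
qed

lemma one_minus_const_X_nonzero: "(1 - fps_const (a :: 'a :: ring_1) * fps_X) \<noteq> 0"
proof
  assume "1 - fps_const a * fps_X = 0"
  then have "(1 - fps_const a * fps_X) $ 0 = 0" by simp
  then show False by simp
qed

lemma shift_coeff_Suc_Suc:
  "shift_coeff c (Suc r) (Suc m) = shift_coeff c r m + c * shift_coeff c (Suc r) m"
proof (cases "r = 0")
  case True
  then show ?thesis by (cases m) (auto simp: shift_coeff_def)
next
  case False
  consider "m < r" | "m = r" | "r < m" by linarith
  then show ?thesis
  proof cases
    case 3
    then obtain r' m' where "r = Suc r'" "m = Suc m'" "r' < m'"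
      using False by (cases r; cases m) auto
    moreover have "c ^ (m' - r') = c * c ^ (m' - Suc r')"
      using \<open>r' < m'\<close> by (metis Suc_diff_Suc power_Suc)
    ultimately show ?thesis
      by (simp add: shift_coeff_def algebra_simps)
  qed (use False in \<open>auto simp: shift_coeff_def\<close>)
qed

lemma shift_series_power_nth: "(shift_series c ^ r) $ m = int (shift_coeff c r m)"
proof (induction r arbitrary: m)
  case 0
  then show ?case by (simp add: shift_coeff_def)
next
  case (Suc r)
  let ?p = "1 - fps_const (int c) * fps_X :: int fps"
  let ?Y = "\<lambda>r. Abs_fps (\<lambda>m. int (shift_coeff c r m))"
  have "?p * ?Y (Suc r) = fps_X * ?Y r"
  proof (rule fps_ext)
    fix m
    show "(?p * ?Y (Suc r)) $ m = (fps_X * ?Y r) $ m"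
      by (cases m) (simp_all add: algebra_simps shift_coeff_Suc_Suc, simp add: shift_coeff_def)
  qed
  also have "\<dots> = ?p * (shift_series c * ?Y r)"
    by (simp add: shift_series_denominator mult.assoc[symmetric])
  finally have "?Y (Suc r) = shift_series c * ?Y r"
    using one_minus_const_X_nonzero[of "int c"] by simp
  moreover have "?Y r = shift_series c ^ r"
    using Suc.IH by (simp add: fps_eq_iff)
  ultimately show ?case
    by (metis fps_nth_Abs_fps power_Suc)
qed

lemma shift_series_partial_fraction:
  "of_int (int b - int a) * shift_series a * shift_series b = shift_series b - shift_series a"
proof -
  let ?p = "1 - fps_const (int a) * fps_X :: int fps"
  let ?q = "1 - fps_const (int b) * fps_X :: int fps"
  have "(of_int (int b - int a) * shift_series a * shift_series b) * (?p * ?q)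
      = of_int (int b - int a) * (?p * shift_series a) * (?q * shift_series b)"
    by (simp only: ac_simps)
  also have "\<dots> = of_int (int b - int a) * fps_X * fps_X"
    by (simp only: shift_series_denominator)
  also have "\<dots> = fps_X * ?p - fps_X * ?q"
    by (simp add: algebra_simps fps_of_nat)
  also have "\<dots> = (?q * shift_series b) * ?p - (?p * shift_series a) * ?q"
    by (simp only: shift_series_denominator)
  also have "\<dots> = (shift_series b - shift_series a) * (?p * ?q)"
    by (simp only: algebra_simps)
  finally show ?thesis
    using one_minus_const_X_nonzero[of "int a"] one_minus_const_X_nonzero[of "int b"] by simp
qed

definition of_int_fps :: "int fps \<Rightarrow> 'b::ring_1 fps" where
  "of_int_fps f = Abs_fps (\<lambda>m. of_int (f $ m))"

lemma of_int_fps_mult: "of_int_fps (f * g) = (of_int_fps f * of_int_fps g :: 'b::ring_1 fps)"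
  by (simp add: of_int_fps_def fps_eq_iff fps_mult_nth)

lemma of_int_fps_diff: "of_int_fps (f - g) = (of_int_fps f - of_int_fps g :: 'b::ring_1 fps)"
  by (simp add: of_int_fps_def fps_eq_iff)

lemma of_int_fps_of_int: "of_int_fps (of_int k) = (of_int k :: 'b::ring_1 fps)"
  by (simp add: of_int_fps_def fps_eq_iff flip: fps_of_int)

lemma of_int_fps_commute: "of_int_fps g * f = f * (of_int_fps g :: 'b::ring_1 fps)"
proof (rule fps_ext)
  fix m
  have "(of_int_fps g * f) $ m = (\<Sum>i=0..m. of_int (g $ (m - i)) * f $ (m - (m - i)))"
    unfolding of_int_fps_def fps_mult_nth fps_nth_Abs_fps
    by (rule sum.atLeastAtMost_rev[of _ 0 m, simplified])
  also have "\<dots> = (\<Sum>i=0..m. f $ i * of_int (g $ (m - i)))"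
    by (rule sum.cong) (simp_all add: mult_of_int_commute)
  also have "\<dots> = (f * of_int_fps g) $ m"
    by (simp add: of_int_fps_def fps_mult_nth)
  finally show "(of_int_fps g * f) $ m = (f * of_int_fps g) $ m" .
qed

text \<open>\<open>series_at x c = \<Sum>\<^sub>r x\<^sub>r x\<^sub>c\<^sup>r\<close>; the integer series \<open>x\<^sub>c\<close> act centrally through \<open>of_int\<close>.\<close>

definition series_at :: "(nat \<Rightarrow> 'b::ring_1) \<Rightarrow> nat \<Rightarrow> 'b fps" where
  "series_at x c = Abs_fps (\<lambda>m. \<Sum>r\<le>m. x r * of_int ((shift_series c ^ r) $ m))"

definition double_series :: "(nat \<Rightarrow> nat \<Rightarrow> 'b::ring_1) \<Rightarrow> nat \<Rightarrow> nat \<Rightarrow> 'b fps" where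
  "double_series z a b = Abs_fps (\<lambda>m. \<Sum>r\<le>m. \<Sum>s\<le>m.
     z r s * of_int ((shift_series a ^ r * shift_series b ^ s) $ m))"

lemma tser_eq_series_at: "tser T i j c = series_at (tt T i j) c"
  by (simp add: tser_def series_at_def shift_series_power_nth)

lemma shift_series_power_nth_eq_0: "m < r \<Longrightarrow> (shift_series c ^ r) $ m = 0"
  by (simp add: shift_series_power_nth shift_coeff_def)

lemma series_at_nth: "m \<le> N \<Longrightarrow> series_at x c $ m = (\<Sum>r\<le>N. x r * of_int ((shift_series c ^ r) $ m))"
  unfolding series_at_def fps_nth_Abs_fps
  by (rule sum.mono_neutral_right[symmetric]) (auto simp: shift_series_power_nth_eq_0)

lemma series_at_mult: "series_at x a * series_at y b = double_series (\<lambda>r s. x r * y s) a b"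
proof (rule fps_ext)
  fix m
  let ?u = "\<lambda>r i. of_int ((shift_series a ^ r) $ i)" and ?v = "\<lambda>s i. of_int ((shift_series b ^ s) $ i)"
  have "(series_at x a * series_at y b) $ m
      = (\<Sum>i=0..m. (\<Sum>r\<le>m. x r * ?u r i) * (\<Sum>s\<le>m. y s * ?v s (m - i)))"
    by (simp add: fps_mult_nth) (rule sum.cong, simp_all add: series_at_nth[of _ m])
  also have "\<dots> = (\<Sum>i=0..m. \<Sum>r\<le>m. \<Sum>s\<le>m. x r * y s * (?u r i * ?v s (m - i)))"
    by (rule sum.cong) (simp_all add: sum_product mult.assoc mult_of_int_commute[of "(shift_series a ^ _) $ _"])
  also have "\<dots> = (\<Sum>r\<le>m. \<Sum>s\<le>m. \<Sum>i=0..m. x r * y s * (?u r i * ?v s (m - i)))"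
    by (subst sum.swap) (simp add: sum.swap[of _ "{0..m}"])
  also have "\<dots> = double_series (\<lambda>r s. x r * y s) a b $ m"
    by (simp add: double_series_def fps_mult_nth sum_distrib_left)
  finally show "(series_at x a * series_at y b) $ m = double_series (\<lambda>r s. x r * y s) a b $ m" .
qed

lemma series_at_mult_swap: "series_at y b * series_at x a = double_series (\<lambda>r s. y s * x r) a b"
  unfolding series_at_mult double_series_def by (subst sum.swap) (simp add: mult.commute)

lemma double_series_diff:
  "double_series (\<lambda>r s. z r s - w r s) a b = double_series z a b - double_series w a b"
  by (simp add: double_series_def fps_eq_iff sum_subtractf left_diff_distrib)

lemma double_series_const_mult:
  "double_series (\<lambda>r s. c * z r s) a b = fps_const c * double_series z a b"
  by (simp add: double_series_def fps_eq_iff sum_distrib_left mult.assoc)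

lemma series_at_add: "series_at (\<lambda>r. x r + y r) c = series_at x c + series_at y c"
  by (simp add: series_at_def fps_eq_iff sum.distrib distrib_right)

lemma series_at_convolution: "series_at (\<lambda>m. \<Sum>r\<le>m. x r * y (m - r)) c = series_at x c * series_at y c"
proof (rule fps_ext)
  fix m
  define F where "F r s = x r * y s * of_int ((shift_series c ^ (r + s)) $ m)" for r s
  have F_eq_0: "F r s \<noteq> 0 \<Longrightarrow> r + s \<le> m" for r s
    by (rule ccontr) (simp add: F_def shift_series_power_nth_eq_0)
  have "series_at (\<lambda>m. \<Sum>r\<le>m. x r * y (m - r)) c $ m = (\<Sum>N\<le>m. \<Sum>r\<le>N. F r (N - r))"
    by (simp add: series_at_def F_def sum_distrib_right)
  also have "\<dots> = (\<Sum>(r, s)\<in>{(r, s). r + s \<le> m}. F r s)"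
    by (rule sum.triangle_reindex_eq[symmetric])
  also have "\<dots> = (\<Sum>(r, s)\<in>{..m} \<times> {..m}. F r s)"
    by (rule sum.mono_neutral_left) (auto simp: F_eq_0)
  also have "\<dots> = (series_at x c * series_at y c) $ m"
    by (simp add: sum.cartesian_product series_at_mult double_series_def F_def power_add)
  finally show "series_at (\<lambda>m. \<Sum>r\<le>m. x r * y (m - r)) c $ m = (series_at x c * series_at y c) $ m" .
qed

lemma of_int_mult_left_commute: "of_int k * (x * y) = x * (of_int k * (y :: 'b::ring_1))"
  by (metis mult.assoc mult_of_int_commute)

lemma of_int_fps_mult_series_at_nth:
  "(of_int_fps g * series_at y c) $ m = (\<Sum>r\<le>m. y r * of_int ((g * shift_series c ^ r) $ m))"
proof -
  have "(of_int_fps g * series_at y c) $ m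
      = (\<Sum>i=0..m. of_int (g $ i) * (\<Sum>r\<le>m. y r * of_int ((shift_series c ^ r) $ (m - i))))"
    by (simp add: of_int_fps_def fps_mult_nth) (rule sum.cong, simp_all add: series_at_nth[of _ m])
  also have "\<dots> = (\<Sum>i=0..m. \<Sum>r\<le>m. y r * (of_int (g $ i) * of_int ((shift_series c ^ r) $ (m - i))))"
    by (rule sum.cong) (simp_all add: sum_distrib_left of_int_mult_left_commute)
  also have "\<dots> = (\<Sum>r\<le>m. y r * of_int ((g * shift_series c ^ r) $ m))"
    by (subst sum.swap) (simp add: fps_mult_nth sum_distrib_left)
  finally show ?thesis .
qed

lemma series_at_split:
  "series_at x c = fps_const (x 0) + of_int_fps (shift_series c) * series_at (\<lambda>r. x (Suc r)) c"
proof (rule fps_ext)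
  fix m
  have tail: "(of_int_fps (shift_series c) * series_at (\<lambda>r. x (Suc r)) c) $ m
      = (\<Sum>r\<le>m. x (Suc r) * of_int ((shift_series c ^ Suc r) $ m))"
    by (simp add: of_int_fps_mult_series_at_nth)
  show "series_at x c $ m = (fps_const (x 0) + of_int_fps (shift_series c) * series_at (\<lambda>r. x (Suc r)) c) $ m"
  proof (cases m)
    case 0
    then show ?thesis by (simp add: tail series_at_def of_int_fps_def shift_series_def)
  next
    case (Suc k)
    have "series_at x c $ m = (\<Sum>r\<le>k. x (Suc r) * of_int ((shift_series c ^ Suc r) $ m))"
      unfolding series_at_def fps_nth_Abs_fps Suc sum.atMost_Suc_shift by simp
    also have "\<dots> = (\<Sum>r\<le>m. x (Suc r) * of_int ((shift_series c ^ Suc r) $ m))"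
      using shift_series_power_nth_eq_0[of m "Suc m" c] by (simp only: Suc sum.atMost_Suc) simp
    finally show ?thesis unfolding fps_add_nth tail using Suc by simp
  qed
qed

definition supercomm :: "'a::ring_1 \<Rightarrow> 'a \<Rightarrow> 'a \<Rightarrow> 'a" where
  "supercomm \<sigma> x y = x * y - \<sigma> * (y * x)"

text \<open>With \<open>x = c + x\<^sub>a U\<close> and \<open>y = d + x\<^sub>b V\<close>, where \<open>c, d\<close> are the constant terms, the partial
  fraction identity reduces the series relation to the shifted relation between coefficients.\<close>

lemma supercomm_split:
  fixes c d Xa Xb U V \<sigma> k :: "'a::ring_1"
  assumes Xa_central: "\<And>z. Xa * z = z * Xa" and Xb_central: "\<And>z. Xb * z = z * Xb"
    and \<sigma>_central: "\<And>z. \<sigma> * z = z * \<sigma>" and k_central: "\<And>z. k * z = z * k"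
    and c: "\<And>z. c * z = \<sigma> * (z * c)" and d: "\<And>z. z * d = \<sigma> * (d * z)"
    and partial_fraction: "k * Xa * Xb = Xb - Xa"
  shows "k * supercomm \<sigma> (c + Xa * U) (d + Xb * V)
       = supercomm \<sigma> U (d + Xb * V) - supercomm \<sigma> (c + Xa * U) V"
proof -
  have Xb_U: "U * (Xb * V) = Xb * (U * V)"
    by (metis Xb_central mult.assoc)
  have Xa_V: "\<sigma> * (V * (Xa * U)) = Xa * (\<sigma> * (V * U))"
    by (metis Xa_central \<sigma>_central mult.assoc)
  have Xb_V: "\<sigma> * (Xb * (V * U)) = Xb * (\<sigma> * (V * U))"
    by (metis Xb_central \<sigma>_central mult.assoc)
  have left: "supercomm \<sigma> (c + Xa * U) (d + Xb * V) = Xa * Xb * supercomm \<sigma> U V"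
  proof -
    have "supercomm \<sigma> (c + Xa * U) (d + Xb * V)
        = (c * (d + Xb * V) - \<sigma> * ((d + Xb * V) * c)) + (Xa * U * d - \<sigma> * (d * (Xa * U)))
          + (Xa * U * (Xb * V) - \<sigma> * (Xb * V * (Xa * U)))"
      by (simp add: supercomm_def algebra_simps)
    also have "\<dots> = Xa * U * (Xb * V) - \<sigma> * (Xb * V * (Xa * U))"
      using c[of "d + Xb * V"] d[of "Xa * U"] by simp
    also have "\<dots> = Xa * Xb * supercomm \<sigma> U V"
      by (simp add: supercomm_def right_diff_distrib) (metis Xa_central Xb_central \<sigma>_central mult.assoc)
    finally show ?thesis .
  qed
  have "supercomm \<sigma> U (d + Xb * V) = Xb * supercomm \<sigma> U V"
    using d[of U] by (simp add: supercomm_def algebra_simps Xb_U Xb_V)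
  moreover have "supercomm \<sigma> (c + Xa * U) V = Xa * supercomm \<sigma> U V"
    using c[of V] by (simp add: supercomm_def algebra_simps Xa_V)
  ultimately show ?thesis
    by (simp add: left mult.assoc[symmetric] partial_fraction left_diff_distrib)
qed

lemma of_int_fps_shift_series_partial_fraction:
  "(of_nat b - of_nat a) * of_int_fps (shift_series a) * of_int_fps (shift_series b)
     = of_int_fps (shift_series b) - (of_int_fps (shift_series a) :: 'b::ring_1 fps)"
proof -
  have "of_int_fps (of_int (int b - int a) * shift_series a * shift_series b)
      = (of_int_fps (shift_series b - shift_series a) :: 'b fps)"
    by (simp only: shift_series_partial_fraction)
  then show ?thesis
    by (simp only: of_int_fps_mult of_int_fps_of_int of_int_fps_diff) simp
qed

lemma supercomm_series_at:
  "supercomm (fps_const \<sigma>) (series_at x a) (series_at y b)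
     = double_series (\<lambda>r s. supercomm \<sigma> (x r) (y s)) a b"
  unfolding supercomm_def series_at_mult_swap[of y b x a] series_at_mult[of x a y b]
  by (simp add: double_series_diff double_series_const_mult)

lemma series_at_supercomm_relation:
  fixes x y p q :: "nat \<Rightarrow> 'b::ring_1" and \<sigma> \<rho> :: 'b
  assumes \<sigma>: "\<sigma> = 1 \<or> \<sigma> = -1"
    and x0: "x 0 = 0 \<or> x 0 = 1 \<and> \<sigma> = 1" and y0: "y 0 = 0 \<or> y 0 = 1 \<and> \<sigma> = 1"
    and rel: "\<And>r s. supercomm \<sigma> (x (Suc r)) (y s) - supercomm \<sigma> (x r) (y (Suc s))
                     = \<rho> * (p r * q s - p s * q r)"
  shows "(of_nat b - of_nat a) * supercomm (fps_const \<sigma>) (series_at x a) (series_at y b)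
       = fps_const \<rho> * (series_at p a * series_at q b - series_at p b * series_at q a)"
proof -
  have "(of_nat b - of_nat a) * supercomm (fps_const \<sigma>) (series_at x a) (series_at y b)
      = supercomm (fps_const \<sigma>) (series_at (\<lambda>r. x (Suc r)) a) (series_at y b)
        - supercomm (fps_const \<sigma>) (series_at x a) (series_at (\<lambda>s. y (Suc s)) b)"
    unfolding series_at_split[of x] series_at_split[of y]
  proof (rule supercomm_split[OF of_int_fps_commute of_int_fps_commute])
    show "\<And>z. fps_const \<sigma> * z = z * fps_const \<sigma>"
      using \<sigma> by (auto simp flip: fps_const_neg)
    show "\<And>z. fps_const (x 0) * z = fps_const \<sigma> * (z * fps_const (x 0))"
      and "\<And>z. z * fps_const (y 0) = fps_const \<sigma> * (fps_const (y 0) * z)"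
      using x0 y0 by auto
    show "\<And>z. (of_nat b - of_nat a :: 'b fps) * z = z * (of_nat b - of_nat a)"
      by (simp add: algebra_simps mult_of_nat_commute)
  qed (rule of_int_fps_shift_series_partial_fraction)
  also have "\<dots> = double_series (\<lambda>r s. \<rho> * (p r * q s - p s * q r)) a b"
    by (simp only: supercomm_series_at flip: double_series_diff rel)
  also have "\<dots> = fps_const \<rho> * (series_at p a * series_at q b - series_at p b * series_at q a)"
    by (simp only: double_series_const_mult double_series_diff series_at_mult[of p a q b]
        series_at_mult_swap[of p b q a])
  finally show ?thesis .
qed

lemma series_at_mult_commute_sign:
  assumes "\<And>r s. x r * y s = \<sigma> * (y s * x r)"
  shows "series_at x a * series_at y b = fps_const \<sigma> * (series_at y b * series_at x a)"
  unfolding series_at_mult_swap[of y b x a] series_at_mult[of x a y b]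
  by (simp add: assms double_series_const_mult)

lemma sum_min_Suc_diff:
  fixes g :: "nat \<Rightarrow> nat \<Rightarrow> 'a::ab_group_add"
  assumes antisym: "\<And>t w. g t w = - g w t" and diag: "\<And>t. g t t = 0"
  shows "(\<Sum>t<min (Suc r) s. g t (r + s - t)) - (\<Sum>t<min r (Suc s). g t (r + s - t)) = g r s"
proof -
  consider "r < s" | "s < r" | "r = s" by linarith
  then show ?thesis
  proof cases
    case 1
    then have "min (Suc r) s = Suc r" "min r (Suc s) = r" by simp_all
    then show ?thesis by simp
  next
    case 2
    then have "min (Suc r) s = s" "min r (Suc s) = Suc s" by simp_all
    then show ?thesis using antisym[of r s] by simp
  qed (simp add: diag)
qed

lemma par_sign_even: "i = j \<or> k = l \<Longrightarrow> even ((par i + par j) * (par k + par l))"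
  by auto

lemma yangian_rels_tt:
  fixes T :: "nat \<Rightarrow> nat \<Rightarrow> nat \<Rightarrow> 'b::ring_1"
  assumes rels: "yangian_rels T" and idx: "i \<in> {1,2}" "j \<in> {1,2}" "k \<in> {1,2}" "l \<in> {1,2}"
  shows "supercomm ((- 1) ^ ((par i + par j) * (par k + par l))) (tt T i j r) (tt T k l s)
       = (- 1) ^ (par i * par j + par i * par k + par j * par k) *
         (\<Sum>t<min r s. tt T k j t * tt T i l (r + s - 1 - t) - tt T k j (r + s - 1 - t) * tt T i l t)"
    (is "supercomm ?\<sigma> _ _ = ?\<rho> * ?S")
proof (cases "r = 0 \<or> s = 0")
  case True
  then show ?thesis
    using par_sign_even[of i j k l] by (auto simp: supercomm_def tt_def)
next
  case False
  then have "tt T i j r = T i j r" "tt T k l s = T k l s"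
    by (simp_all add: tt_def)
  moreover have "T i j r * T k l s - ?\<sigma> * T k l s * T i j r = ?\<rho> * ?S"
    using rels idx False unfolding yangian_rels_def by blast
  ultimately show ?thesis
    by (simp add: supercomm_def mult.assoc)
qed

lemma yangian_rels_tt_shift:
  fixes T :: "nat \<Rightarrow> nat \<Rightarrow> nat \<Rightarrow> 'b::ring_1"
  assumes rels: "yangian_rels T" and idx: "i \<in> {1,2}" "j \<in> {1,2}" "k \<in> {1,2}" "l \<in> {1,2}"
  defines "\<sigma> \<equiv> (- 1) ^ ((par i + par j) * (par k + par l))"
    and "\<rho> \<equiv> (- 1) ^ (par i * par j + par i * par k + par j * par k)"
  shows "supercomm \<sigma> (tt T i j (Suc r)) (tt T k l s) - supercomm \<sigma> (tt T i j r) (tt T k l (Suc s))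
       = \<rho> * (tt T k j r * tt T i l s - tt T k j s * tt T i l r)"
proof -
  let ?g = "\<lambda>t w. tt T k j t * tt T i l w - tt T k j w * tt T i l t"
  have "supercomm \<sigma> (tt T i j (Suc r)) (tt T k l s) - supercomm \<sigma> (tt T i j r) (tt T k l (Suc s))
      = \<rho> * ((\<Sum>t<min (Suc r) s. ?g t (r + s - t)) - (\<Sum>t<min r (Suc s). ?g t (r + s - t)))"
    unfolding \<sigma>_def \<rho>_def yangian_rels_tt[OF rels idx] by (simp add: right_diff_distrib)
  also have "\<dots> = \<rho> * ?g r s"
    by (subst sum_min_Suc_diff) simp_all
  finally show ?thesis .
qed

lemma yangian_rels_t11_commute:
  assumes rels: "yangian_rels T"
  shows "tt T 1 1 r * tt T 1 1 s = tt T 1 1 s * tt T 1 1 r"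
proof -
  define C where "C r s = tt T 1 1 r * tt T 1 1 s - tt T 1 1 s * tt T 1 1 r" for r s
  have step: "C (Suc r) s = C r (Suc s) + C r s" for r s
    using yangian_rels_tt_shift[OF rels, of 1 1 1 1 r s]
    by (simp add: C_def supercomm_def par_def algebra_simps)
  have "C r s = 0" for r s
  proof (induction r arbitrary: s)
    case 0
    then show ?case by (simp add: C_def tt_def)
  next
    case (Suc r)
    then show ?case by (simp only: step) simp
  qed
  then show ?thesis by (simp add: C_def)
qed

lemma fps_const_neg_one_power: "fps_const ((- 1) ^ n) = (- 1 :: 'a::ring_1 fps) ^ n"
  by (metis fps_const_power fps_const_neg fps_const_1_eq_1)

lemma tser_supercomm_relation:
  fixes T :: "nat \<Rightarrow> nat \<Rightarrow> nat \<Rightarrow> 'b::ring_1"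
  assumes rels: "yangian_rels T" and idx: "i \<in> {1,2}" "j \<in> {1,2}" "k \<in> {1,2}" "l \<in> {1,2}"
  shows "(of_nat b - of_nat a) *
           supercomm ((- 1) ^ ((par i + par j) * (par k + par l))) (tser T i j a) (tser T k l b)
       = (- 1) ^ (par i * par j + par i * par k + par j * par k) *
           (tser T k j a * tser T i l b - tser T k j b * tser T i l a)"
proof -
  let ?\<sigma> = "(- 1 :: 'b) ^ ((par i + par j) * (par k + par l))"
  let ?\<rho> = "(- 1 :: 'b) ^ (par i * par j + par i * par k + par j * par k)"
  have "(of_nat b - of_nat a) * supercomm (fps_const ?\<sigma>) (tser T i j a) (tser T k l b)
      = fps_const ?\<rho> * (tser T k j a * tser T i l b - tser T k j b * tser T i l a)"
    unfolding tser_eq_series_at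
  proof (rule series_at_supercomm_relation)
    show "?\<sigma> = 1 \<or> ?\<sigma> = - 1"
      by (metis neg_one_even_power neg_one_odd_power)
    show "tt T i j 0 = 0 \<or> tt T i j 0 = 1 \<and> ?\<sigma> = 1" "tt T k l 0 = 0 \<or> tt T k l 0 = 1 \<and> ?\<sigma> = 1"
      using par_sign_even[of i j k l] by (auto simp: tt_def)
  qed (rule yangian_rels_tt_shift[OF rels idx])
  then show ?thesis
    by (simp only: fps_const_neg_one_power)
qed

lemma tser_super_commute:
  fixes A B :: "nat \<Rightarrow> nat \<Rightarrow> nat \<Rightarrow> 'b::ring_1"
  assumes cross: "super_commute_families A B"
    and idx: "i \<in> {1,2}" "j \<in> {1,2}" "k \<in> {1,2}" "l \<in> {1,2}"
  shows "tser A i j a * tser B k l b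
       = (- 1) ^ ((par i + par j) * (par k + par l)) * (tser B k l b * tser A i j a)"
proof -
  let ?\<sigma> = "(- 1 :: 'b) ^ ((par i + par j) * (par k + par l))"
  have "tt A i j r * tt B k l s = ?\<sigma> * (tt B k l s * tt A i j r)" for r s
  proof (cases "r = 0 \<or> s = 0")
    case True
    then show ?thesis
      using par_sign_even[of i j k l] by (auto simp: tt_def)
  next
    case False
    then have "tt A i j r = A i j r" "tt B k l s = B k l s"
      by (simp_all add: tt_def)
    moreover have "A i j r * B k l s = ?\<sigma> * B k l s * A i j r"
      using cross idx False unfolding super_commute_families_def by blast
    ultimately show ?thesis
      by (simp add: mult.assoc)
  qed
  then show ?thesis
    unfolding tser_eq_series_at fps_const_neg_one_power[symmetric] by (rule series_at_mult_commute_sign)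
qed

lemma tser_Delta_gen_11:
  "tser (Delta_gen A B) 1 1 c = tser A 1 1 c * tser B 1 1 c + tser A 1 2 c * tser B 2 1 c"
proof -
  have "tt (Delta_gen A B) 1 1
      = (\<lambda>r. (\<Sum>a\<le>r. tt A 1 1 a * tt B 1 1 (r - a)) + (\<Sum>a\<le>r. tt A 1 2 a * tt B 2 1 (r - a)))"
  proof
    fix r
    show "tt (Delta_gen A B) 1 1 r
      = (\<Sum>a\<le>r. tt A 1 1 a * tt B 1 1 (r - a)) + (\<Sum>a\<le>r. tt A 1 2 a * tt B 2 1 (r - a))"
      by (cases "r = 0") (simp_all add: tt_def Delta_gen_def)
  qed
  then show ?thesis
    by (simp add: tser_eq_series_at series_at_add series_at_convolution)
qed

definition prod_down :: "(nat \<Rightarrow> 'a::monoid_mult) \<Rightarrow> nat \<Rightarrow> nat \<Rightarrow> 'a" where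
  "prod_down f c n = prod_list (map f (rev [c..<c + n]))"

definition prod_up :: "(nat \<Rightarrow> 'a::monoid_mult) \<Rightarrow> nat \<Rightarrow> nat \<Rightarrow> 'a" where
  "prod_up f c n = prod_list (map f [c..<c + n])"

lemma prod_down_0 [simp]: "prod_down f c 0 = 1"
  by (simp add: prod_down_def)

lemma prod_up_0 [simp]: "prod_up f c 0 = 1"
  by (simp add: prod_up_def)

lemma prod_down_Suc: "prod_down f c (Suc n) = f (c + n) * prod_down f c n"
  by (simp add: prod_down_def)

lemma prod_up_Suc: "prod_up f c (Suc n) = prod_up f c n * f (c + n)"
  by (simp add: prod_up_def)

lemma prod_down_Suc_right: "prod_down f c (Suc n) = prod_down f (Suc c) n * f c"
  by (induction n) (simp_all add: prod_down_Suc mult.assoc)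

lemma prod_up_Suc_left: "prod_up f c (Suc n) = f c * prod_up f (Suc c) n"
  by (induction n) (simp_all add: prod_up_Suc mult.assoc)

lemma prod_up_commute:
  assumes "\<And>d. x * f d = f d * x"
  shows "x * prod_up f c n = prod_up f c n * x"
proof (induction n)
  case (Suc n)
  then show ?case
    by (simp add: prod_up_Suc assms mult.assoc flip: mult.assoc[of x])
qed simp

lemma prod_down_mult_shift:
  assumes "\<And>d. f (Suc d) * g d = g (Suc d) * f d"
  shows "prod_down f (Suc c) n * g c = g (c + n) * prod_down f c n"
proof (induction n)
  case (Suc n)
  have "prod_down f (Suc c) (Suc n) * g c = f (Suc (c + n)) * (prod_down f (Suc c) n * g c)"
    by (simp add: prod_down_Suc mult.assoc)
  also have "\<dots> = g (c + Suc n) * prod_down f c (Suc n)"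
    by (simp add: Suc assms prod_down_Suc flip: mult.assoc)
  finally show ?case .
qed simp

lemma prod_up_mult_shift:
  assumes "\<And>d. g d * f (Suc d) = f d * g (Suc d)"
  shows "g c * prod_up f (Suc c) n = prod_up f c n * g (c + n)"
proof (induction n arbitrary: c)
  case (Suc n)
  have "g c * prod_up f (Suc c) (Suc n) = f c * (g (Suc c) * prod_up f (Suc (Suc c)) n)"
    by (simp add: prod_up_Suc_left assms flip: mult.assoc)
  also have "\<dots> = prod_up f c (Suc n) * g (c + Suc n)"
    by (simp add: Suc prod_up_Suc_left mult.assoc)
  finally show ?case .
qed simp

lemma of_nat_mult_left_commute: "of_nat m * (x * y) = x * (of_nat m * (y :: 'a::semiring_1))"
  by (metis mult.assoc mult_of_nat_commute)

text \<open>\<open>T c\<close>, \<open>E c\<close>, \<open>S c\<close>, \<open>F c\<close> stand for \<open>t\<^sub>1\<^sub>1(u - c) \<otimes> 1\<close>, \<open>t\<^sub>1\<^sub>2(u - c) \<otimes> 1\<close>,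
  \<open>1 \<otimes> t\<^sub>1\<^sub>1(u - c)\<close> and \<open>1 \<otimes> t\<^sub>2\<^sub>1(u - c)\<close>.\<close>

locale coproduct_t11 =
  fixes T E S F :: "nat \<Rightarrow> 'r::ring_1"
  assumes T_E: "(of_nat b - of_nat a) * (T a * E b - E b * T a) = T a * E b - T b * E a"
    and E_E: "E (Suc d) * E d = 0"
    and S_S: "S a * S b = S b * S a"
    and S_F: "(of_nat b - of_nat a) * (S a * F b - F b * S a) = F a * S b - F b * S a"
    and T_S: "T a * S b = S b * T a"
    and E_S: "E a * S b = S b * E a"
    and T_F: "T a * F b = F b * T a"
    and E_F: "E a * F b = - (F b * E a)"
begin

lemma T_E_shift: "T (Suc d) * E d = E (Suc d) * T d"
  using T_E[of "Suc d" d] by (simp add: algebra_simps)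

lemma F_S_shift: "F d * S (Suc d) = S d * F (Suc d)"
  using S_F[of "Suc d" d] by (simp add: algebra_simps)

lemma S_F_gap: "of_nat k * (S (c + k) * F c) = of_nat (Suc k) * (F c * S (c + k)) - F (c + k) * S c"
proof -
  have "(of_nat c - of_nat (c + k) :: 'r) = - of_nat k"
    by simp
  with S_F[of c "c + k"] show ?thesis
    by (simp add: algebra_simps)
qed

lemma prod_up_S_mult_F:
  "prod_up S (Suc c) (Suc k) * F c
     = of_nat (k + 2) * (F c * prod_up S (Suc c) (Suc k))
       - of_nat (k + 1) * (F (Suc c) * (S c * prod_up S (Suc (Suc c)) k))"
proof (induction k)
  case 0
  show ?case
    using S_F_gap[of 1 c] by (simp add: prod_up_def algebra_simps)
next
  case (Suc k)
  let ?R = "prod_up S (Suc c) (Suc k)" and ?Q = "prod_up S (Suc (Suc c)) k"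
  define s f where "s = S (c + (k + 2))" and "f = F (c + (k + 2))"
  have S_commute: "S e * prod_up S d m = prod_up S d m * S e" for e d m
    by (intro prod_up_commute S_S)
  have R: "prod_up S (Suc c) (Suc (Suc k)) = s * ?R"
    unfolding prod_up_Suc[of S "Suc c" "Suc k"] s_def by (simp add: S_commute)
  have Q: "prod_up S (Suc (Suc c)) (Suc k) = s * ?Q"
    unfolding prod_up_Suc[of S "Suc (Suc c)" k] s_def by (simp add: S_commute)
  have R_Q: "S c * ?R = S (Suc c) * (S c * ?Q)"
    by (simp add: prod_up_Suc_left S_S flip: mult.assoc)
  have s_Q: "s * (S c * ?Q) = S c * (s * ?Q)"
    by (simp add: s_def S_S flip: mult.assoc)
  have gap0: "of_nat (k + 2) * (s * F c) = of_nat (k + 3) * (F c * s) - f * S c"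
    using S_F_gap[of "k + 2" c] unfolding s_def f_def by (simp only: numeral_nat add_Suc_right add_Suc)
  have gap1: "of_nat (k + 1) * (s * F (Suc c)) = of_nat (k + 2) * (F (Suc c) * s) - f * S (Suc c)"
    using S_F_gap[of "k + 1" "Suc c"] unfolding s_def f_def by (simp only: numeral_nat add_Suc_right add_Suc)
  have "prod_up S (Suc c) (Suc (Suc k)) * F c = s * (?R * F c)"
    by (simp add: R mult.assoc)
  also have "\<dots> = of_nat (k + 2) * (s * F c) * ?R - of_nat (k + 1) * (s * F (Suc c)) * (S c * ?Q)"
    by (simp only: Suc.IH right_diff_distrib mult.assoc of_nat_mult_left_commute)
  also have "\<dots> = (of_nat (k + 3) * (F c * s) - f * S c) * ?R
      - (of_nat (k + 2) * (F (Suc c) * s) - f * S (Suc c)) * (S c * ?Q)"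
    by (simp only: gap0 gap1)
  also have "\<dots> = of_nat (k + 3) * (F c * (s * ?R)) - of_nat (k + 2) * (F (Suc c) * (S c * (s * ?Q)))"
    by (simp add: algebra_simps R_Q flip: s_Q)
  finally show ?case
    by (simp only: R Q numeral_nat add_Suc_right add_Suc add_0_right)
qed

lemma F_prod_up_S: "F c * prod_up S (Suc c) n = prod_up S c n * F (c + n)"
  by (rule prod_up_mult_shift) (rule F_S_shift)

lemma prod_down_T_E: "prod_down T (Suc c) n * E c = E (c + n) * prod_down T c n"
  by (rule prod_down_mult_shift) (rule T_E_shift)

lemma prod_up_S_F_identity:
  "prod_up S (Suc c) (Suc n) * F c + of_nat (Suc n) * (prod_up S (Suc c) n * F (c + Suc n) * S c)
     = of_nat (Suc (Suc n)) * (prod_up S c (Suc n) * F (c + Suc n))"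
proof -
  have "F (Suc c) * (S c * prod_up S (Suc (Suc c)) n) = F (Suc c) * prod_up S (Suc (Suc c)) n * S c"
    by (simp add: prod_up_commute S_S mult.assoc)
  also have "\<dots> = prod_up S (Suc c) n * F (c + Suc n) * S c"
    by (simp add: F_prod_up_S)
  finally show ?thesis
    using prod_up_S_mult_F[of c n] F_prod_up_S[of c "Suc n"] by (simp add: algebra_simps)
qed

lemma coproduct_leading_step:
  "prod_down T (Suc c) n * prod_up S (Suc c) n * (T c * S c + E c * F c)
     = prod_down T c (Suc n) * prod_up S c (Suc n)
       + E (c + n) * prod_down T c n * (prod_up S (Suc c) n * F c)"
proof -
  let ?P = "prod_down T (Suc c) n" and ?Q = "prod_up S (Suc c) n"
  have Q_T: "?Q * (T c * x) = T c * (?Q * x)" and Q_E: "?Q * (E c * x) = E c * (?Q * x)" for x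
    by (simp_all add: prod_up_commute T_S E_S flip: mult.assoc)
  have "?P * ?Q * (T c * S c + E c * F c) = (?P * T c) * (?Q * S c) + (?P * E c) * (?Q * F c)"
    by (simp add: distrib_left mult.assoc Q_T Q_E)
  also have "?P * T c = prod_down T c (Suc n)"
    by (simp only: prod_down_Suc_right)
  also have "?Q * S c = prod_up S c (Suc n)"
    by (simp add: prod_up_Suc_left prod_up_commute S_S)
  finally show ?thesis
    by (simp add: prod_down_T_E mult.assoc)
qed

lemma coproduct_correction_step:
  "E (c + Suc n) * prod_down T (Suc c) n * (prod_up S (Suc c) n * F d) * (T c * S c + E c * F c)
     = E (c + Suc n) * prod_down T c (Suc n) * (prod_up S (Suc c) n * F d * S c)"
proof -
  let ?E = "E (c + Suc n)" and ?P = "prod_down T (Suc c) n" and ?Q = "prod_up S (Suc c) n"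
  have Q_T: "?Q * T c = T c * ?Q"
    by (simp add: prod_up_commute T_S)
  have Q_E: "?Q * (E c * x) = E c * (?Q * x)" and F_E: "F d * (E c * x) = - (E c * (F d * x))" for x
    using E_F[of c d] by (simp_all add: prod_up_commute E_S minus_equation_iff[of "F d * E c"] flip: mult.assoc)
  have "?Q * F d * (T c * S c) = T c * (?Q * F d * S c)"
    by (metis mult.assoc T_F Q_T)
  then have T_part: "?E * ?P * (?Q * F d) * (T c * S c) = ?E * prod_down T c (Suc n) * (?Q * F d * S c)"
    by (simp add: prod_down_Suc_right mult.assoc)
  have "?Q * F d * (E c * F c) = - (E c * (?Q * F d * F c))"
    by (simp add: mult.assoc F_E Q_E)
  then have "?E * ?P * (?Q * F d) * (E c * F c) = - (?E * (?P * E c) * (?Q * F d * F c))"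
    by (simp add: mult.assoc)
  also have "\<dots> = - (E (Suc (c + n)) * E (c + n) * prod_down T c n * (?Q * F d * F c))"
    by (simp add: prod_down_T_E mult.assoc)
  finally have E_part: "?E * ?P * (?Q * F d) * (E c * F c) = 0"
    by (simp add: E_E)
  show ?thesis
    by (simp only: distrib_left T_part E_part add_0_right)
qed

theorem prod_down_coproduct:
  "prod_down (\<lambda>i. T i * S i + E i * F i) c (Suc n)
     = prod_down T c (Suc n) * prod_up S c (Suc n)
       + of_nat (Suc n) * (E (c + n) * prod_down T c n * (prod_up S c n * F (c + n)))"
proof (induction n arbitrary: c)
  case 0
  show ?case by (simp add: prod_down_def prod_up_def)
next
  case (Suc n)
  let ?D = "\<lambda>i. T i * S i + E i * F i"
  let ?E = "E (c + Suc n)" and ?P = "prod_down T c (Suc n)" and ?F = "F (c + Suc n)"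
  have "prod_down ?D c (Suc (Suc n)) = prod_down ?D (Suc c) (Suc n) * ?D c"
    by (rule prod_down_Suc_right)
  also have "\<dots> = prod_down T (Suc c) (Suc n) * prod_up S (Suc c) (Suc n) * ?D c
      + of_nat (Suc n) * (?E * prod_down T (Suc c) n * (prod_up S (Suc c) n * ?F) * ?D c)"
    by (simp only: Suc.IH add_Suc_shift distrib_right mult.assoc)
  also have "\<dots> = prod_down T c (Suc (Suc n)) * prod_up S c (Suc (Suc n))
      + ?E * ?P * (prod_up S (Suc c) (Suc n) * F c)
      + of_nat (Suc n) * (?E * ?P * (prod_up S (Suc c) n * ?F * S c))"
    by (simp only: coproduct_leading_step coproduct_correction_step)
  also have "\<dots> = prod_down T c (Suc (Suc n)) * prod_up S c (Suc (Suc n))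
      + ?E * ?P * (prod_up S (Suc c) (Suc n) * F c + of_nat (Suc n) * (prod_up S (Suc c) n * ?F * S c))"
    by (simp only: distrib_left of_nat_mult_left_commute mult.assoc add.assoc)
  also have "\<dots> = prod_down T c (Suc (Suc n)) * prod_up S c (Suc (Suc n))
      + of_nat (Suc (Suc n)) * (?E * ?P * (prod_up S c (Suc n) * ?F))"
    by (simp only: prod_up_S_F_identity) (simp only: of_nat_mult_left_commute mult.assoc)
  finally show ?case .
qed

end

lemma tser_t11_commute:
  assumes "yangian_rels T"
  shows "tser T 1 1 a * tser T 1 1 b = tser T 1 1 b * tser T 1 1 a"
proof -
  have "tt T 1 1 r * tt T 1 1 s = 1 * (tt T 1 1 s * tt T 1 1 r)" for r s
    using yangian_rels_t11_commute[OF assms] by simp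
  from series_at_mult_commute_sign[OF this, where a=a and b=b] show ?thesis
    by (simp add: tser_eq_series_at)
qed

lemma tser_t12_shift_square:
  fixes T :: "nat \<Rightarrow> nat \<Rightarrow> nat \<Rightarrow> 'b::ring_1"
  assumes rels: "yangian_rels T" and no_2_torsion: "\<And>x :: 'b. x + x = 0 \<Longrightarrow> x = 0"
  shows "tser T 1 2 (Suc d) * tser T 1 2 d = 0"
proof -
  let ?Z = "tser T 1 2 (Suc d) * tser T 1 2 d"
  have "- ?Z = ?Z"
    using tser_supercomm_relation[OF rels, of 1 2 1 2 d "Suc d"] by (simp add: par_def supercomm_def)
  then have Z_Z: "?Z + ?Z = 0"
    by (metis eq_neg_iff_add_eq_0)
  show ?thesis
  proof (rule fps_ext)
    fix m
    have "?Z $ m + ?Z $ m = 0"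
      by (simp only: Z_Z flip: fps_add_nth) simp
    then show "?Z $ m = 0 $ m"
      by (simp only: fps_zero_nth) (rule no_2_torsion)
  qed
qed

lemma algebra_over_double_eq_0:
  fixes emb :: "'k::field \<Rightarrow> 'b::ring_1" and x :: 'b
  assumes alg: "is_algebra_over emb" and two: "(2::'k) \<noteq> 0" and "x + x = 0"
  shows "x = 0"
proof -
  have "emb (1 / 2) * 2 = emb (1 / 2 * 2)"
    using alg unfolding is_algebra_over_def by (metis one_add_one)
  also have "\<dots> = 1"
    using alg two unfolding is_algebra_over_def by simp
  finally have "x = emb (1 / 2) * (x + x)"
    by (metis mult_2 mult.assoc mult_1)
  with \<open>x + x = 0\<close> show ?thesis
    by simp
qed

lemma coproduct_t11_tser:
  fixes A B :: "nat \<Rightarrow> nat \<Rightarrow> nat \<Rightarrow> 'b::ring_1"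
  assumes relA: "yangian_rels A" and relB: "yangian_rels B" and cross: "super_commute_families A B"
    and no_2_torsion: "\<And>x :: 'b. x + x = 0 \<Longrightarrow> x = 0"
  shows "coproduct_t11 (tser A 1 1) (tser A 1 2) (tser B 1 1) (tser B 2 1)"
proof
  fix a b d :: nat
  show "(of_nat b - of_nat a) * (tser A 1 1 a * tser A 1 2 b - tser A 1 2 b * tser A 1 1 a)
      = tser A 1 1 a * tser A 1 2 b - tser A 1 1 b * tser A 1 2 a"
    using tser_supercomm_relation[OF relA, of 1 1 1 2 b a] by (simp add: par_def supercomm_def)
  show "(of_nat b - of_nat a) * (tser B 1 1 a * tser B 2 1 b - tser B 2 1 b * tser B 1 1 a)
      = tser B 2 1 a * tser B 1 1 b - tser B 2 1 b * tser B 1 1 a"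
    using tser_supercomm_relation[OF relB, of 1 1 2 1 b a] by (simp add: par_def supercomm_def)
  show "tser B 1 1 a * tser B 1 1 b = tser B 1 1 b * tser B 1 1 a"
    by (rule tser_t11_commute[OF relB])
  show "tser A 1 1 a * tser B 1 1 b = tser B 1 1 b * tser A 1 1 a"
    and "tser A 1 2 a * tser B 1 1 b = tser B 1 1 b * tser A 1 2 a"
    and "tser A 1 1 a * tser B 2 1 b = tser B 2 1 b * tser A 1 1 a"
    and "tser A 1 2 a * tser B 2 1 b = - (tser B 2 1 b * tser A 1 2 a)"
    using tser_super_commute[OF cross, of _ _ _ _ a b] by (simp_all add: par_def)
  show "tser A 1 2 (Suc d) * tser A 1 2 d = 0"
    using relA no_2_torsion by (rule tser_t12_shift_square)
qed

theorem lemmaA2: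
  fixes emb :: "'k::alg_closed_field \<Rightarrow> 'b::ring_1"
    and A B :: "nat \<Rightarrow> nat \<Rightarrow> nat \<Rightarrow> 'b"
    and n :: nat
  assumes char_k: "CHAR('k) > 2"
    and alg: "is_algebra_over emb"
    and relA: "yangian_rels A"
    and relB: "yangian_rels B"
    and cross: "super_commute_families A B"
    and n_pos: "n > 0"
  shows "prod_list (map (\<lambda>c. tser (Delta_gen A B) 1 1 c) (rev [0..<n]))
       = prod_list (map (\<lambda>c. tser A 1 1 c) (rev [0..<n]))
           * prod_list (map (\<lambda>c. tser B 1 1 c) [0..<n])
         + of_nat n *
           ((tser A 1 2 (n - 1) * prod_list (map (\<lambda>c. tser A 1 1 c) (rev [0..<n - 1])))
            * (prod_list (map (\<lambda>c. tser B 1 1 c) [0..<n - 1]) * tser B 2 1 (n - 1)))"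
proof -
  have "(2::'k) \<noteq> 0"
    using char_k of_nat_eq_0_iff_char_dvd[of 2, where 'a='k] by (auto dest: dvd_imp_le)
  then have "x + x = 0 \<Longrightarrow> x = 0" for x :: 'b
    using algebra_over_double_eq_0[OF alg] by blast
  then interpret coproduct_t11 "tser A 1 1" "tser A 1 2" "tser B 1 1" "tser B 2 1"
    using coproduct_t11_tser[OF relA relB cross] by blast
  obtain m where n: "n = Suc m"
    using n_pos gr0_implies_Suc by blast
  have "tser (Delta_gen A B) 1 1 = (\<lambda>i. tser A 1 1 i * tser B 1 1 i + tser A 1 2 i * tser B 2 1 i)"
    by (rule ext) (rule tser_Delta_gen_11)
  then show ?thesis
    using prod_down_coproduct[of 0 m] by (simp add: n prod_down_def prod_up_def)
qed

end
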